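(* Let $H$ be a graded, connected, free and cofree Hopf algebra over $K$, with $\mathfrak g=\mathrm{Prim}(H)$. Then for all $n\ge1$, $\dim(\mathfrak g_n)=\dim\big(\big(\frac{H^+}{H^{+2}}\big)_n\big)$.
   Context: $K$ is a commutative field of characteristic $\neq2$. A graded connected Hopf algebra is a Hopf algebra $H=\bigoplus_{n\ge0}H_n$ over $K$ with homogeneous structure maps, $H_0=K$ and every $H_n$ finite-dimensional. $H^+=\bigoplus_{n\ge1}H_n$, $H^{+2}$ is the span of products of two elements of $H^+$, $\mathfrak g_n=\mathfrak g\cap H_n$. $H$ is free if there is a graded subspace $V$ with $T(V)\to H$ an algebra isomorphism; cofree if it is isomorphic as a graded coalgebra to $coT(W)$ ($T(W)$ with deconcatenation coproduct) for some graded $W$ with $W_0=0$. *)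

theory Defs
  imports Complex_Main
begin

text \<open>
  Elements of tensor powers H (x) H and H (x) H (x) H are represented by finite lists of pairs
  (finite sums of elementary tensors). Two such lists represent the same element of H (x) H iff
  they agree on all pairs of linear functionals (over a field the pairing with H* x H* separates
  the points of H (x) H); this is the relation teq.
\<close>

definition lfun :: "('k::field \<Rightarrow> 'h::ab_group_add \<Rightarrow> 'h) \<Rightarrow> ('h \<Rightarrow> 'k) \<Rightarrow> bool" where
  "lfun scale f \<longleftrightarrow> (\<forall>x y. f (x + y) = f x + f y) \<and> (\<forall>c x. f (scale c x) = c * f x)"

definition tev :: "('h \<Rightarrow> 'k::field) \<Rightarrow> ('h \<Rightarrow> 'k) \<Rightarrow> ('h \<times> 'h) list \<Rightarrow> 'k" where
  "tev f g xs = (\<Sum>(x, y)\<leftarrow>xs. f x * g y)"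

definition teq :: "('k::field \<Rightarrow> 'h::ab_group_add \<Rightarrow> 'h) \<Rightarrow> ('h \<times> 'h) list \<Rightarrow> ('h \<times> 'h) list \<Rightarrow> bool" where
  "teq scale xs ys \<longleftrightarrow>
     (\<forall>f g. lfun scale f \<longrightarrow> lfun scale g \<longrightarrow> tev f g xs = tev f g ys)"

definition graded_connected_hopf ::
  "('k::field \<Rightarrow> 'h::ring_1 \<Rightarrow> 'h) \<Rightarrow> (nat \<Rightarrow> 'h set) \<Rightarrow> ('h \<Rightarrow> ('h \<times> 'h) list)
     \<Rightarrow> ('h \<Rightarrow> 'k) \<Rightarrow> ('h \<Rightarrow> 'h) \<Rightarrow> bool" where
  "graded_connected_hopf scale Hn \<Delta> \<epsilon> S \<longleftrightarrow>
     \<comment> \<open>K-algebra\<close>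
     vector_space scale \<and>
     (\<forall>c x y. scale c (x * y) = scale c x * y \<and> scale c (x * y) = x * scale c y) \<and>
     \<comment> \<open>grading: H = direct sum of the subspaces H_n, each finite-dimensional\<close>
     (\<forall>n. module.subspace scale (Hn n)) \<and>
     (\<forall>n. \<exists>B. finite B \<and> Hn n \<subseteq> module.span scale B) \<and>
     UNIV \<subseteq> module.span scale (\<Union>n. Hn n) \<and>
     (\<forall>(x :: nat \<Rightarrow> 'h) N. (\<forall>n. x n \<in> Hn n) \<longrightarrow> (\<Sum>n<N. x n) = 0 \<longrightarrow> (\<forall>n<N. x n = 0)) \<and>
     \<comment> \<open>connected and multiplication homogeneous\<close>
     Hn 0 = range (\<lambda>c. scale c 1) \<and>
     (\<forall>m n x y. x \<in> Hn m \<longrightarrow> y \<in> Hn n \<longrightarrow> x * y \<in> Hn (m + n)) \<and>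
     \<comment> \<open>coproduct: linear, homogeneous, coassociative, algebra morphism\<close>
     (\<forall>x y. teq scale (\<Delta> (x + y)) (\<Delta> x @ \<Delta> y)) \<and>
     (\<forall>c x. teq scale (\<Delta> (scale c x)) (map (\<lambda>(a, b). (scale c a, b)) (\<Delta> x))) \<and>
     (\<forall>n x. x \<in> Hn n \<longrightarrow>
        (\<exists>zs. teq scale (\<Delta> x) zs \<and> (\<forall>(a, b)\<in>set zs. \<exists>i\<le>n. a \<in> Hn i \<and> b \<in> Hn (n - i)))) \<and>
     (\<forall>z f g h. lfun scale f \<longrightarrow> lfun scale g \<longrightarrow> lfun scale h \<longrightarrow>
        (\<Sum>(x, y)\<leftarrow>\<Delta> z. tev f g (\<Delta> x) * h y) = (\<Sum>(x, y)\<leftarrow>\<Delta> z. f x * tev g h (\<Delta> y))) \<and>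
     (\<forall>x y. teq scale (\<Delta> (x * y))
        (concat (map (\<lambda>(a, b). map (\<lambda>(a', b'). (a * a', b * b')) (\<Delta> y)) (\<Delta> x)))) \<and>
     teq scale (\<Delta> 1) [(1, 1)] \<and>
     \<comment> \<open>counit: linear, homogeneous, algebra morphism, counit laws\<close>
     lfun scale \<epsilon> \<and>
     (\<forall>n x. 0 < n \<longrightarrow> x \<in> Hn n \<longrightarrow> \<epsilon> x = 0) \<and>
     (\<forall>x y. \<epsilon> (x * y) = \<epsilon> x * \<epsilon> y) \<and> \<epsilon> 1 = 1 \<and>
     (\<forall>x. (\<Sum>(a, b)\<leftarrow>\<Delta> x. scale (\<epsilon> a) b) = x) \<and>
     (\<forall>x. (\<Sum>(a, b)\<leftarrow>\<Delta> x. scale (\<epsilon> b) a) = x) \<and>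
     \<comment> \<open>antipode: linear, homogeneous, antipode laws\<close>
     (\<forall>x y. S (x + y) = S x + S y) \<and> (\<forall>c x. S (scale c x) = scale c (S x)) \<and>
     (\<forall>n x. x \<in> Hn n \<longrightarrow> S x \<in> Hn n) \<and>
     (\<forall>x. (\<Sum>(a, b)\<leftarrow>\<Delta> x. S a * b) = scale (\<epsilon> x) 1) \<and>
     (\<forall>x. (\<Sum>(a, b)\<leftarrow>\<Delta> x. a * S b) = scale (\<epsilon> x) 1)"

definition graded_subspace :: "('k::field \<Rightarrow> 'h::ring_1 \<Rightarrow> 'h) \<Rightarrow> (nat \<Rightarrow> 'h set) \<Rightarrow> 'h set \<Rightarrow> bool" where
  "graded_subspace scale Hn V \<longleftrightarrow>
     module.subspace scale V \<and> V \<subseteq> module.span scale (\<Union>n. V \<inter> Hn n)"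

text \<open>Free: there is a graded subspace V such that the algebra map T(V) -> H induced by the
  inclusion is bijective, i.e. the words (products) in V span H, and for every finite linearly
  independent subset B of V, distinct words in B give distinct and linearly independent
  products (the words in a basis form a basis of T(V)).\<close>
definition free_hopf :: "('k::field \<Rightarrow> 'h::ring_1 \<Rightarrow> 'h) \<Rightarrow> (nat \<Rightarrow> 'h set) \<Rightarrow> bool" where
  "free_hopf scale Hn \<longleftrightarrow>
     (\<exists>V. graded_subspace scale Hn V \<and>
        UNIV \<subseteq> module.span scale (prod_list ` lists V) \<and>
        (\<forall>B. finite B \<longrightarrow> B \<subseteq> V \<longrightarrow> \<not> module.dependent scale B \<longrightarrow>
           inj_on prod_list (lists B) \<and> \<not> module.dependent scale (prod_list ` lists B)))"

text \<open>Cofree: there is a graded vector space W (W_0 = 0) and a graded coalgebra isomorphism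
  phi : coT(W) -> H, where coT(W) carries the deconcatenation coproduct and the counit
  killing all words of positive length. W is realised inside the type 'h (with the grading of H);
  this is no loss, since phi restricted to W is injective and graded. The linear map phi on T(W)
  is given by its values on words (a function on lists, multilinear in each letter).\<close>
definition cofree_hopf :: "('k::field \<Rightarrow> 'h::ring_1 \<Rightarrow> 'h) \<Rightarrow> (nat \<Rightarrow> 'h set)
     \<Rightarrow> ('h \<Rightarrow> ('h \<times> 'h) list) \<Rightarrow> ('h \<Rightarrow> 'k) \<Rightarrow> bool" where
  "cofree_hopf scale Hn \<Delta> \<epsilon> \<longleftrightarrow>
     (\<exists>W (\<phi> :: 'h list \<Rightarrow> 'h).
        graded_subspace scale Hn W \<and> W \<inter> Hn 0 = {0} \<and>
        \<comment> \<open>phi is multilinear on words in W\<close>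
        (\<forall>xs ys u v a b. xs \<in> lists W \<longrightarrow> ys \<in> lists W \<longrightarrow> u \<in> W \<longrightarrow> v \<in> W \<longrightarrow>
           \<phi> (xs @ [scale a u + scale b v] @ ys) = scale a (\<phi> (xs @ [u] @ ys)) + scale b (\<phi> (xs @ [v] @ ys))) \<and>
        \<comment> \<open>phi is graded\<close>
        (\<forall>w d. w \<in> lists W \<longrightarrow> (\<forall>i<length w. w ! i \<in> Hn (d i)) \<longrightarrow> \<phi> w \<in> Hn (\<Sum>i<length w. d i)) \<and>
        \<comment> \<open>phi is a coalgebra morphism\<close>
        (\<forall>w. w \<in> lists W \<longrightarrow>
           teq scale (\<Delta> (\<phi> w)) (map (\<lambda>i. (\<phi> (take i w), \<phi> (drop i w))) [0..<Suc (length w)])) \<and>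
        (\<forall>w. w \<in> lists W \<longrightarrow> \<epsilon> (\<phi> w) = (if w = [] then 1 else 0)) \<and>
        \<comment> \<open>phi is bijective\<close>
        UNIV \<subseteq> module.span scale (\<phi> ` lists W) \<and>
        (\<forall>B. finite B \<longrightarrow> B \<subseteq> W \<longrightarrow> \<not> module.dependent scale B \<longrightarrow>
           inj_on \<phi> (lists B) \<and> \<not> module.dependent scale (\<phi> ` lists B)))"

definition prim :: "('k::field \<Rightarrow> 'h::ring_1 \<Rightarrow> 'h) \<Rightarrow> ('h \<Rightarrow> ('h \<times> 'h) list) \<Rightarrow> 'h set" where
  "prim scale \<Delta> = {x. teq scale (\<Delta> x) [(x, 1), (1, x)]}"

definition Hplus :: "('k::field \<Rightarrow> 'h::ring_1 \<Rightarrow> 'h) \<Rightarrow> (nat \<Rightarrow> 'h set) \<Rightarrow> 'h set" where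
  "Hplus scale Hn = module.span scale (\<Union>n\<in>{1..}. Hn n)"

definition Hplus2 :: "('k::field \<Rightarrow> 'h::ring_1 \<Rightarrow> 'h) \<Rightarrow> (nat \<Rightarrow> 'h set) \<Rightarrow> 'h set" where
  "Hplus2 scale Hn = module.span scale {a * b | a b. a \<in> Hplus scale Hn \<and> b \<in> Hplus scale Hn}"

text \<open>Dimension of the degree-n part of H^+/H^{+2}: the degree-n part is the image of H_n in the
  quotient, whose kernel is H_n \<inter> H^{+2}; so its dimension is dim H_n - dim (H_n \<inter> H^{+2}).\<close>
definition indec_dim :: "('k::field \<Rightarrow> 'h::ring_1 \<Rightarrow> 'h) \<Rightarrow> (nat \<Rightarrow> 'h set) \<Rightarrow> nat \<Rightarrow> nat" where
  "indec_dim scale Hn n = vector_space.dim scale (Hn n) - vector_space.dim scale (Hn n \<inter> Hplus2 scale Hn)"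

end

theory Submission imports Defs begin

text \<open>Choose homogeneous bases of the generating spaces. For a free H, the words in a basis of
  the generators V form a basis of H, and the letters of degree n give a basis of
  (H^+/H^{+2})_n, the words of length at least two spanning H_n \<inter> H^{+2}. For a cofree H,
  the images of the words in a basis of W form a basis of H, and by the deconcatenation formula
  the primitives of degree n are exactly the images of the letters of degree n. Counting words
  by first letter gives dim H_m = \<Sum>_{k=1..m} a_k dim H_{m-k} with a_k the number of letters of
  degree k, in both cases; since dim H_0 = 1 this recursion determines a_k, so both dimensions
  agree.\<close>

lemma convolution_recurrence_coeffs_eq:
  fixes D a b :: "nat \<Rightarrow> nat"
  assumes D0: "D 0 = 1"
    and Ra: "\<And>m. 1 \<le> m \<Longrightarrow> D m = (\<Sum>k\<in>{1..m}. a k * D (m - k))"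
    and Rb: "\<And>m. 1 \<le> m \<Longrightarrow> D m = (\<Sum>k\<in>{1..m}. b k * D (m - k))"
  shows "1 \<le> m \<Longrightarrow> a m = b m"
proof (induction m rule: less_induct)
  case (less m)
  have split: "(\<Sum>k\<in>{1..m}. c k * D (m - k)) = (\<Sum>k\<in>{1..<m}. c k * D (m - k)) + c m"
    for c :: "nat \<Rightarrow> nat"
  proof -
    have "{1..m} = insert m {1..<m}" using less.prems by auto
    then show ?thesis using D0 by (simp add: add.commute)
  qed
  have "(\<Sum>k\<in>{1..<m}. a k * D (m - k)) = (\<Sum>k\<in>{1..<m}. b k * D (m - k))"
    using less.IH by (intro sum.cong) auto
  then show ?case using Ra[OF less.prems] Rb[OF less.prems] split[of a] split[of b] by simp
qed

lemma prod_list_graded: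
  fixes Hn :: "nat \<Rightarrow> 'a::monoid_mult set"
  assumes "1 \<in> Hn 0" and mult_Hn: "\<And>x y i j. x \<in> Hn i \<Longrightarrow> y \<in> Hn j \<Longrightarrow> x * y \<in> Hn (i + j)"
  shows "(\<forall>i<length w. w ! i \<in> Hn (d i)) \<Longrightarrow> prod_list w \<in> Hn (\<Sum>i<length w. d i)"
proof (induction w arbitrary: d)
  case Nil
  then show ?case using assms(1) by simp
next
  case (Cons a w)
  have "\<forall>i<length w. w ! i \<in> Hn (d (Suc i))"
    using Cons.prems by auto
  then have "prod_list w \<in> Hn (\<Sum>i<length w. d (Suc i))"
    using Cons.IH[of "\<lambda>i. d (Suc i)"] by blast
  moreover have "a \<in> Hn (d 0)" using Cons.prems by auto
  ultimately have "a * prod_list w \<in> Hn (d 0 + (\<Sum>i<length w. d (Suc i)))" using mult_Hn by blast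
  then show ?case by (simp only: length_Cons sum.lessThan_Suc_shift prod_list.Cons)
qed

lemma sum_take_drop_indicator:
  "(\<Sum>i<Suc (length w). (if take i w = u then 1 else 0) * (if drop i w = v then 1 else (0::'k::field)))
     = (if w = u @ v then 1 else 0)"
proof -
  have "(if take i w = u then 1 else 0) * (if drop i w = v then 1 else (0::'k))
      = (if i = length u then (if w = u @ v then 1 else 0) else 0)" if i: "i < Suc (length w)" for i
  proof (cases "take i w = u \<and> drop i w = v")
    case True
    then have "length u = i" using i by auto
    moreover have "w = u @ v" using True by (metis append_take_drop_id)
    ultimately show ?thesis using True by simp
  next
    case False
    have "\<not> (i = length u \<and> w = u @ v)" using False by auto
    then show ?thesis using False by auto
  qed
  then have "(\<Sum>i<Suc (length w). (if take i w = u then 1 else 0) * (if drop i w = v then 1 else (0::'k)))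
     = (\<Sum>i<Suc (length w). (if i = length u then (if w = u @ v then 1 else 0) else 0))"
    by (intro sum.cong) auto
  also have "\<dots> = (if w = u @ v then 1 else 0)"
    by (auto simp: sum.delta)
  finally show ?thesis .
qed

lemma vector_space_field_mult: "vector_space ((*) :: 'k::field \<Rightarrow> 'k \<Rightarrow> 'k)"
  by unfold_locales (auto simp: algebra_simps)

lemma lfun_indicator_exists:
  fixes scale :: "'k::field \<Rightarrow> 'h::ab_group_add \<Rightarrow> 'h"
  assumes vs: "vector_space scale" and B: "\<not> module.dependent scale B"
  obtains f where "lfun scale f" and "\<And>y. y \<in> B \<Longrightarrow> f y = (if y = p then 1 else 0)"
proof -
  interpret vector_space_pair scale "(*) :: 'k \<Rightarrow> 'k \<Rightarrow> 'k"
    using vs vector_space_field_mult by (simp add: vector_space_pair_def)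
  let ?f = "construct B (\<lambda>y. if y = p then (1::'k) else 0)"
  have "Vector_Spaces.linear scale (*) ?f" by (rule linear_construct) (use B in simp)
  then have "lfun scale ?f" by (simp add: lfun_def Vector_Spaces.linear_iff)
  moreover have "\<And>y. y \<in> B \<Longrightarrow> ?f y = (if y = p then 1 else 0)"
    using construct_basis B by simp
  ultimately show ?thesis by (rule that)
qed

lemma tev_append: "tev f g (xs @ ys) = tev f g xs + tev f g ys"
  by (simp add: tev_def)

lemma tev_scale_left:
  assumes "lfun scale f"
  shows "tev f g (map (\<lambda>(a, b). (scale c a, b)) xs) = c * tev f g xs"
  using assms by (induction xs) (auto simp: tev_def lfun_def algebra_simps)

locale graded_vector_space = vector_space scale for scale :: "'k::field \<Rightarrow> 'h::ring_1 \<Rightarrow> 'h" +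
  fixes Hn :: "nat \<Rightarrow> 'h set"
  assumes subspace_Hn: "\<And>n. subspace (Hn n)"
    and finite_dim_Hn: "\<And>n. \<exists>B. finite B \<and> Hn n \<subseteq> span B"
    and Hn_direct_sum: "\<And>(x::nat\<Rightarrow>'h) N. (\<forall>n. x n \<in> Hn n) \<Longrightarrow> (\<Sum>n<N. x n) = 0 \<Longrightarrow> \<forall>n<N. x n = 0"
begin

lemma homogeneous_sum_eq_0D:
  assumes "finite K" "\<And>k. k \<in> K \<Longrightarrow> x k \<in> Hn k" "(\<Sum>k\<in>K. x k) = 0" "k \<in> K"
  shows "x k = 0"
proof -
  define y where "y n = (if n \<in> K then x n else 0)" for n
  define N where "N = Suc (Max K)"
  have KN: "K \<subseteq> {..<N}" using assms(1) by (auto simp: N_def less_Suc_eq_le)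
  have "(\<Sum>n<N. y n) = (\<Sum>n\<in>K. y n)"
    by (rule sum.mono_neutral_right) (use KN assms(1) in \<open>auto simp: y_def\<close>)
  also have "\<dots> = 0" using assms(3) by (simp add: y_def)
  finally have "\<forall>n<N. y n = 0"
    by (intro Hn_direct_sum) (auto simp: y_def assms(2) subspace_0[OF subspace_Hn])
  then show ?thesis using KN assms(4) by (auto simp: y_def)
qed

lemma Hn_inter_Hn_eq_0:
  assumes "j \<noteq> k" "v \<in> Hn j" "v \<in> Hn k"
  shows "v = 0"
proof -
  have "(if i = j then v else - v) \<in> Hn i" if "i \<in> {j,k}" for i
    using that assms subspace_neg[OF subspace_Hn] by auto
  then show ?thesis
    using homogeneous_sum_eq_0D[of "{j,k}" "\<lambda>i. if i = j then v else - v" j] assms(1) by auto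
qed

lemma homogeneous_part_of_sum:
  assumes T: "finite T" and dg: "\<And>y. y \<in> T \<Longrightarrow> y \<in> Hn (dg y)" and x: "x \<in> Hn m"
    and xs: "x = (\<Sum>y\<in>T. scale (c y) y)"
  shows "x = (\<Sum>y\<in>{y\<in>T. dg y = m}. scale (c y) y)"
proof -
  define K where "K = insert m (dg ` T)"
  define z where "z k = (\<Sum>y\<in>{y\<in>T. dg y = k}. scale (c y) y) - (if k = m then x else 0)" for k
  have fK: "finite K" using T by (simp add: K_def)
  have zH: "z k \<in> Hn k" for k
    unfolding z_def
    by (intro subspace_diff[OF subspace_Hn] subspace_sum[OF subspace_Hn] subspace_scale[OF subspace_Hn])
       (auto simp: dg x subspace_0[OF subspace_Hn])
  have "(\<Sum>k\<in>K. z k) = (\<Sum>k\<in>K. (\<Sum>y\<in>{y\<in>T. dg y = k}. scale (c y) y)) - (\<Sum>k\<in>K. (if k = m then x else 0))"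
    by (simp add: z_def sum_subtractf)
  also have "(\<Sum>k\<in>K. (\<Sum>y\<in>{y\<in>T. dg y = k}. scale (c y) y)) = (\<Sum>y\<in>T. scale (c y) y)"
    by (rule sum.group) (use T fK in \<open>auto simp: K_def\<close>)
  also have "(\<Sum>k\<in>K. (if k = m then x else 0)) = x" using fK by (simp add: K_def)
  finally have "(\<Sum>k\<in>K. z k) = 0" using xs by (simp only: diff_self)
  then have "z m = 0" using homogeneous_sum_eq_0D[OF fK, where x=z and k=m] zH by (simp add: K_def)
  then show ?thesis by (simp add: z_def)
qed

lemma in_span_homogeneous_part:
  assumes x: "x \<in> Hn m" "x \<in> span T" and dg: "\<And>y. y \<in> T \<Longrightarrow> y \<in> Hn (dg y)"
  shows "x \<in> span {y\<in>T. dg y = m}"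
proof -
  obtain t r where t: "finite t" "t \<subseteq> T" "x = (\<Sum>a\<in>t. scale (r a) a)"
    using x(2) unfolding span_explicit by blast
  have "x = (\<Sum>y\<in>{y\<in>t. dg y = m}. scale (r y) y)"
    by (rule homogeneous_part_of_sum[OF t(1) _ x(1) t(3)]) (use dg t(2) in auto)
  also have "\<dots> \<in> span {y\<in>T. dg y = m}"
    by (intro span_sum span_scale span_base) (use t(2) in auto)
  finally show ?thesis .
qed

lemma independent_UN_homogeneous:
  assumes C: "\<And>k. C k \<subseteq> Hn k" "\<And>k. independent (C k)"
  shows "independent (\<Union>k. C k)"
  unfolding independent_explicit_module
proof (intro allI impI)
  fix t u v assume t: "finite t" "t \<subseteq> (\<Union>k. C k)" "(\<Sum>v\<in>t. scale (u v) v) = 0" "v \<in> t"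
  have uniq: "a \<in> C j \<Longrightarrow> a \<in> C k \<Longrightarrow> j = k" for a j k
    using Hn_inter_Hn_eq_0[of j k a] C dependent_zero[of "C j"] by blast
  define dg where "dg a = (SOME k. a \<in> C k)" for a
  have dgC: "a \<in> t \<Longrightarrow> a \<in> C (dg a)" for a
    unfolding dg_def using t(2) by (metis (mono_tags, lifting) UN_iff subsetD someI_ex)
  define s where "s (k::nat) = (\<Sum>a\<in>{a\<in>t. dg a = k}. scale (u a) a)" for k
  have "(\<Sum>k\<in>dg ` t. s k) = 0"
    unfolding s_def by (subst sum.group) (use t in auto)
  moreover have "s k \<in> Hn k" for k
    unfolding s_def using dgC C(1)
    by (intro subspace_sum[OF subspace_Hn] subspace_scale[OF subspace_Hn]) blast
  ultimately have "s (dg v) = 0" using t(1,4) homogeneous_sum_eq_0D[of "dg ` t" s "dg v"] by blast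
  moreover have "{a\<in>t. dg a = dg v} \<subseteq> C (dg v)" using dgC by force
  ultimately show "u v = 0"
    unfolding s_def
    using independentD[OF C(2)[of "dg v"], of "{a\<in>t. dg a = dg v}" u v] t(1,4) by auto
qed

end

text \<open>A graded space U with U_0 = 0 and a graded multilinear map \<psi> on words in U which induces
  a linear isomorphism T(U) \<rightarrow> H: the common shape of freeness (\<psi> = product) and cofreeness.\<close>

locale graded_word_basis = graded_vector_space scale Hn
  for scale :: "'k::field \<Rightarrow> 'h::ring_1 \<Rightarrow> 'h" and Hn +
  fixes U :: "'h set" and \<psi> :: "'h list \<Rightarrow> 'h"
  assumes subspace_U: "subspace U"
    and U_graded: "U \<subseteq> span (\<Union>n. U \<inter> Hn n)"
    and U_inter_Hn_0: "U \<inter> Hn 0 = {0}"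
    and psi_multilinear: "\<And>xs ys u v a b. xs \<in> lists U \<Longrightarrow> ys \<in> lists U \<Longrightarrow> u \<in> U \<Longrightarrow> v \<in> U \<Longrightarrow>
      \<psi> (xs @ [scale a u + scale b v] @ ys) = scale a (\<psi> (xs @ [u] @ ys)) + scale b (\<psi> (xs @ [v] @ ys))"
    and psi_graded: "\<And>w d. w \<in> lists U \<Longrightarrow> (\<forall>i<length w. w ! i \<in> Hn (d i)) \<Longrightarrow>
      \<psi> w \<in> Hn (\<Sum>i<length w. d i)"
    and span_psi_words: "UNIV \<subseteq> span (\<psi> ` lists U)"
    and psi_words_basis: "\<And>B. finite B \<Longrightarrow> B \<subseteq> U \<Longrightarrow> independent B \<Longrightarrow>
      inj_on \<psi> (lists B) \<and> independent (\<psi> ` lists B)"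
begin

definition letters :: "nat \<Rightarrow> 'h set" where
  "letters k = (SOME B. finite B \<and> B \<subseteq> U \<inter> Hn k \<and> independent B \<and> U \<inter> Hn k \<subseteq> span B)"

lemma letters_exist: "\<exists>B. finite B \<and> B \<subseteq> U \<inter> Hn k \<and> independent B \<and> U \<inter> Hn k \<subseteq> span B"
proof -
  obtain B where B: "B \<subseteq> U \<inter> Hn k" "independent B" "U \<inter> Hn k \<subseteq> span B"
    by (rule basis_exists)
  obtain B0 where B0: "finite B0" "Hn k \<subseteq> span B0" using finite_dim_Hn[of k] by blast
  have "finite B" using independent_span_bound[OF B0(1) B(2)] B(1) B0(2) by blast
  then show ?thesis using B by blast
qed

lemma letters: "finite (letters k)" "letters k \<subseteq> U" "letters k \<subseteq> Hn k"
  "independent (letters k)" "U \<inter> Hn k \<subseteq> span (letters k)"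
  using someI_ex[OF letters_exist[of k]] unfolding letters_def[symmetric] by auto

lemma letters_0: "letters 0 = {}"
proof -
  have "letters 0 \<subseteq> {0}" using letters(2,3)[of 0] U_inter_Hn_0 by blast
  moreover have "0 \<notin> letters 0" using letters(4)[of 0] dependent_zero by blast
  ultimately show ?thesis by blast
qed

lemma letters_disjoint: "c \<in> letters j \<Longrightarrow> c \<in> letters k \<Longrightarrow> j = k"
  using Hn_inter_Hn_eq_0[of j k c] letters(3,4) dependent_zero[of "letters j"] by blast

definition alphabet :: "'h set" where
  "alphabet = (\<Union>k. letters k)"

lemma independent_alphabet: "independent alphabet"
  unfolding alphabet_def by (rule independent_UN_homogeneous) (use letters in auto)

lemma alphabet_subset_U: "alphabet \<subseteq> U"
  unfolding alphabet_def using letters(2) by blast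

lemma U_subset_span_alphabet: "U \<subseteq> span alphabet"
proof -
  have "U \<inter> Hn n \<subseteq> span alphabet" for n
    using letters(5)[of n] span_mono[of "letters n" alphabet] by (auto simp: alphabet_def)
  then have "(\<Union>n. U \<inter> Hn n) \<subseteq> span alphabet" by blast
  then have "span (\<Union>n. U \<inter> Hn n) \<subseteq> span alphabet" by (simp add: span_minimal)
  then show ?thesis using U_graded by blast
qed

definition letter_deg :: "'h \<Rightarrow> nat" where
  "letter_deg c = (SOME k. c \<in> letters k)"

lemma letter_deg_eq: "c \<in> letters k \<Longrightarrow> letter_deg c = k"
  unfolding letter_deg_def by (metis (mono_tags) letters_disjoint someI_ex)

lemma letters_letter_deg: "c \<in> alphabet \<Longrightarrow> c \<in> letters (letter_deg c)"
  unfolding alphabet_def using letter_deg_eq by blast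

lemma letter_deg_pos: "c \<in> alphabet \<Longrightarrow> 1 \<le> letter_deg c"
  using letters_letter_deg[of c] letters_0 by (cases "letter_deg c") auto

definition weight :: "'h list \<Rightarrow> nat" where
  "weight w = sum_list (map letter_deg w)"

lemma weight_simps [simp]: "weight [] = 0" "weight (c # w) = letter_deg c + weight w"
  by (auto simp: weight_def)

lemma length_le_weight: "w \<in> lists alphabet \<Longrightarrow> length w \<le> weight w"
  by (induction w) (auto dest: letter_deg_pos)

lemma psi_weight: "w \<in> lists alphabet \<Longrightarrow> \<psi> w \<in> Hn (weight w)"
proof -
  assume w: "w \<in> lists alphabet"
  have "w ! i \<in> Hn (letter_deg (w ! i))" if "i < length w" for i
  proof -
    have "w ! i \<in> alphabet" using w that by (simp add: in_lists_conv_set)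
    then show ?thesis using letters_letter_deg letters(3) by blast
  qed
  then have "\<psi> w \<in> Hn (\<Sum>i<length w. letter_deg (w ! i))"
    using w alphabet_subset_U by (intro psi_graded) auto
  then show ?thesis
    unfolding weight_def by (simp add: sum_list_sum_nth atLeast0LessThan)
qed

lemma psi_in_span_letter:
  assumes xs: "xs \<in> lists U" and ys: "ys \<in> lists U" and A: "A \<subseteq> U" and u: "u \<in> span A"
  shows "\<psi> (xs @ [u] @ ys) \<in> span ((\<lambda>a. \<psi> (xs @ [a] @ ys)) ` A)"
proof -
  have spA: "span A \<subseteq> U" using A subspace_U by (simp add: span_minimal)
  have "u \<in> span A \<and> \<psi> (xs @ [u] @ ys) \<in> span ((\<lambda>a. \<psi> (xs @ [a] @ ys)) ` A)"
    using u
  proof (induction rule: span_induct_alt)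
    case base
    have "\<psi> (xs @ [0] @ ys) = 0"
      using psi_multilinear[OF xs ys, of 0 0 0 0] subspace_0[OF subspace_U] by simp
    then show ?case by (simp add: span_zero)
  next
    case (step c x y)
    have "x \<in> U" "y \<in> U" using step A spA by blast+
    then have "\<psi> (xs @ [scale c x + y] @ ys) = scale c (\<psi> (xs @ [x] @ ys)) + \<psi> (xs @ [y] @ ys)"
      using psi_multilinear[OF xs ys, of x y c 1] by simp
    moreover have "\<psi> (xs @ [x] @ ys) \<in> span ((\<lambda>a. \<psi> (xs @ [a] @ ys)) ` A)"
      by (rule span_base) (use step in auto)
    moreover have "scale c x + y \<in> span A"
      using step span_base[of x A] by (intro span_add span_scale) auto
    ultimately show ?case using step by (simp add: span_add span_scale)
  qed
  then show ?thesis by blast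
qed

lemma psi_in_span_alphabet_words:
  "ys \<in> lists U \<Longrightarrow> xs \<in> lists alphabet \<Longrightarrow> \<psi> (xs @ ys) \<in> span (\<psi> ` lists alphabet)"
proof (induction ys arbitrary: xs)
  case Nil
  then show ?case by (auto intro: span_base)
next
  case (Cons y ys)
  have "xs \<in> lists U" using Cons.prems alphabet_subset_U by auto
  then have "\<psi> (xs @ [y] @ ys) \<in> span ((\<lambda>a. \<psi> (xs @ [a] @ ys)) ` alphabet)"
    using Cons.prems alphabet_subset_U U_subset_span_alphabet by (intro psi_in_span_letter) auto
  also have "\<dots> \<subseteq> span (\<psi> ` lists alphabet)"
    using Cons.IH[of "xs @ [_]"] Cons.prems by (intro span_minimal) auto
  finally show ?case by simp
qed

lemma span_psi_alphabet_words: "x \<in> span (\<psi> ` lists alphabet)"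
proof -
  have "\<psi> ` lists U \<subseteq> span (\<psi> ` lists alphabet)"
    using psi_in_span_alphabet_words[of _ "[]"] by auto
  then have "span (\<psi> ` lists U) \<subseteq> span (\<psi> ` lists alphabet)" by (simp add: span_minimal)
  then show ?thesis using span_psi_words by blast
qed

lemma inj_on_psi_alphabet_words: "inj_on \<psi> (lists alphabet)"
proof (rule inj_onI)
  fix w w' assume w: "w \<in> lists alphabet" "w' \<in> lists alphabet" "\<psi> w = \<psi> w'"
  let ?B = "set w \<union> set w'"
  have "?B \<subseteq> alphabet" using w by auto
  then have "inj_on \<psi> (lists ?B)"
    using psi_words_basis[of ?B] alphabet_subset_U independent_mono[OF independent_alphabet] by auto
  then show "w = w'" using w(3) by (auto dest: inj_onD)
qed

definition letters_upto :: "nat \<Rightarrow> 'h set" where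
  "letters_upto m = (\<Union>k\<in>{..m}. letters k)"

lemma letters_upto: "finite (letters_upto m)" "letters_upto m \<subseteq> U"
  "inj_on \<psi> (lists (letters_upto m))" "independent (\<psi> ` lists (letters_upto m))"
proof -
  have sub: "letters_upto m \<subseteq> alphabet" by (auto simp: letters_upto_def alphabet_def)
  show "finite (letters_upto m)" using letters(1) by (simp add: letters_upto_def)
  show "letters_upto m \<subseteq> U" using sub alphabet_subset_U by blast
  then show "inj_on \<psi> (lists (letters_upto m))" "independent (\<psi> ` lists (letters_upto m))"
    using psi_words_basis \<open>finite (letters_upto m)\<close> independent_mono[OF independent_alphabet sub]
    by auto
qed

definition words :: "nat \<Rightarrow> 'h list set" where
  "words m = {w \<in> lists alphabet. weight w = m}"

lemma words_subset_lists_letters_upto: "words m \<subseteq> lists (letters_upto m)"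
proof
  fix w assume w: "w \<in> words m"
  have "c \<in> letters_upto m" if c: "c \<in> set w" for c
  proof -
    have "letter_deg c \<le> weight w" unfolding weight_def using c by (simp add: member_le_sum_list)
    then show ?thesis using w c letters_letter_deg unfolding words_def letters_upto_def by auto
  qed
  then show "w \<in> lists (letters_upto m)" by auto
qed

lemma finite_words: "finite (words m)"
proof -
  have "words m \<subseteq> {xs. set xs \<subseteq> letters_upto m \<and> length xs \<le> m}"
    using words_subset_lists_letters_upto length_le_weight unfolding words_def by fastforce
  then show ?thesis using finite_lists_length_le[OF letters_upto(1)] finite_subset by blast
qed

lemma words_nonempty: "1 \<le> m \<Longrightarrow> w \<in> words m \<Longrightarrow> w \<noteq> []"
  unfolding words_def by auto

lemma inj_on_psi_words: "inj_on \<psi> (words m)"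
  by (rule inj_on_subset[OF letters_upto(3) words_subset_lists_letters_upto])

lemma independent_psi_words: "independent (\<psi> ` words m)"
  by (rule independent_mono[OF letters_upto(4) image_mono[OF words_subset_lists_letters_upto]])

lemma psi_words_subset_Hn: "\<psi> ` words m \<subseteq> Hn m"
  using psi_weight unfolding words_def by auto

lemma in_span_words_of_weight:
  assumes "x \<in> Hn m" "x \<in> span (\<psi> ` S)" "S \<subseteq> lists alphabet"
  shows "x \<in> span (\<psi> ` {w\<in>S. weight w = m})"
proof -
  define dg where "dg y = weight (inv_into (lists alphabet) \<psi> y)" for y
  have dg_psi: "dg (\<psi> w) = weight w" if "w \<in> lists alphabet" for w
    unfolding dg_def using inj_on_psi_alphabet_words that by simp
  have "x \<in> span {y \<in> \<psi> ` S. dg y = m}"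
    by (rule in_span_homogeneous_part[OF assms(1,2)])
      (use assms(3) in \<open>auto simp: dg_psi psi_weight subset_iff\<close>)
  also have "{y \<in> \<psi> ` S. dg y = m} = \<psi> ` {w\<in>S. weight w = m}"
    using assms(3) by (auto simp: dg_psi subset_iff)
  finally show ?thesis .
qed

lemma Hn_subset_span_words: "Hn m \<subseteq> span (\<psi> ` words m)"
  using in_span_words_of_weight[of _ m "lists alphabet"] span_psi_alphabet_words
  unfolding words_def by auto

lemma dim_Hn_eq_card_words: "dim (Hn m) = card (words m)"
proof -
  have "dim (Hn m) = card (\<psi> ` words m)"
    by (rule dim_unique[OF psi_words_subset_Hn Hn_subset_span_words independent_psi_words refl])
  then show ?thesis using card_image[OF inj_on_psi_words] by simp
qed

lemma words_by_first_letter: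
  assumes "1 \<le> m"
  shows "words m = (\<Union>k\<in>{1..m}. \<Union>c\<in>letters k. (#) c ` words (m - k))"
proof safe
  fix w assume w: "w \<in> words m"
  then obtain c w' where cw: "w = c # w'" using words_nonempty[OF assms] by (cases w) auto
  have "c \<in> alphabet" "w' \<in> lists alphabet" "letter_deg c + weight w' = m"
    using w cw unfolding words_def by auto
  then show "w \<in> (\<Union>k\<in>{1..m}. \<Union>c\<in>letters k. (#) c ` words (m - k))"
    using letters_letter_deg[of c] letter_deg_pos[of c] cw unfolding words_def
    by (intro UN_I[of "letter_deg c"] UN_I[of c]) auto
next
  fix k c w assume "k \<in> {1..m}" "c \<in> letters k" "w \<in> words (m - k)"
  then show "c # w \<in> words m" using letter_deg_eq[of c k] unfolding words_def alphabet_def by auto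
qed

lemma dim_Hn_recurrence:
  assumes "1 \<le> m"
  shows "dim (Hn m) = (\<Sum>k\<in>{1..m}. card (letters k) * dim (Hn (m - k)))"
proof -
  have "card (words m) = (\<Sum>k\<in>{1..m}. card (\<Union>c\<in>letters k. (#) c ` words (m - k)))"
    unfolding words_by_first_letter[OF assms]
    by (rule card_UN_disjoint) (use letters(1) finite_words letters_disjoint in auto)
  also have "\<dots> = (\<Sum>k\<in>{1..m}. \<Sum>c\<in>letters k. card ((#) c ` words (m - k)))"
    by (rule sum.cong[OF refl], rule card_UN_disjoint) (use letters(1) finite_words in auto)
  also have "\<dots> = (\<Sum>k\<in>{1..m}. card (letters k) * card (words (m - k)))"
    by (rule sum.cong[OF refl]) (simp add: card_image)
  finally show ?thesis by (simp add: dim_Hn_eq_card_words)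
qed

lemma words_length_1: "{w \<in> words m. length w = 1} = (\<lambda>c. [c]) ` letters m"
proof safe
  fix w assume "w \<in> words m" "length w = 1"
  then obtain c where "w = [c]" "c \<in> alphabet" "letter_deg c = m"
    unfolding words_def by (cases w) auto
  then show "w \<in> (\<lambda>c. [c]) ` letters m" using letters_letter_deg by auto
next
  fix c assume "c \<in> letters m"
  then show "[c] \<in> words m" using letter_deg_eq[of c m] unfolding words_def alphabet_def by auto
qed auto

lemma card_words_length_1: "card {w \<in> words m. length w = 1} = card (letters m)"
  unfolding words_length_1 by (simp add: card_image inj_on_def)

end

locale free_graded_algebra = graded_word_basis scale Hn U prod_list
  for scale :: "'k::field \<Rightarrow> 'h::ring_1 \<Rightarrow> 'h" and Hn and U +
  assumes scale_mult_left: "\<And>c x y. scale c x * y = scale c (x * y)"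
    and scale_mult_right: "\<And>c x y. x * scale c y = scale c (x * y)"
    and mult_Hn: "\<And>x y i j. x \<in> Hn i \<Longrightarrow> y \<in> Hn j \<Longrightarrow> x * y \<in> Hn (i + j)"
begin

lemma mult_in_span_products:
  assumes a: "a \<in> span A" and b: "b \<in> span B"
  shows "a * b \<in> span {x * y |x y. x \<in> A \<and> y \<in> B}"
proof -
  let ?S = "span {x * y |x y. x \<in> A \<and> y \<in> B}"
  have left: "x * b \<in> ?S" if x: "x \<in> A" for x
    using b
  proof (induction rule: span_induct_alt)
    case base
    then show ?case by (simp add: span_zero)
  next
    case (step c y z)
    have "x * (scale c y + z) = scale c (x * y) + x * z" by (simp add: distrib_left scale_mult_right)
    moreover have "x * y \<in> ?S" using x step(1) by (intro span_base) blast
    ultimately show ?case using step(2) by (simp add: span_add span_scale)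
  qed
  show ?thesis
    using a
  proof (induction rule: span_induct_alt)
    case base
    then show ?case by (simp add: span_zero)
  next
    case (step c x z)
    have "(scale c x + z) * b = scale c (x * b) + z * b" by (simp add: distrib_right scale_mult_left)
    then show ?case using step left by (simp add: span_add span_scale)
  qed
qed

lemma Hplus_subset_span_nonempty_words:
  "Hplus scale Hn \<subseteq> span (prod_list ` {w\<in>lists alphabet. w \<noteq> []})"
  unfolding Hplus_def
proof (rule span_minimal[OF _ subspace_span], rule subsetI)
  fix x assume "x \<in> (\<Union>n\<in>{1..}. Hn n)"
  then obtain k where k: "1 \<le> k" "x \<in> Hn k" by auto
  have "x \<in> span (prod_list ` words k)" using Hn_subset_span_words k(2) by blast
  also have "\<dots> \<subseteq> span (prod_list ` {w\<in>lists alphabet. w \<noteq> []})"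
    using words_nonempty[OF k(1)] unfolding words_def by (intro span_mono image_mono) auto
  finally show "x \<in> span (prod_list ` {w\<in>lists alphabet. w \<noteq> []})" .
qed

lemma Hplus2_subset_span_long_words:
  "Hplus2 scale Hn \<subseteq> span (prod_list ` {w\<in>lists alphabet. 2 \<le> length w})"
  unfolding Hplus2_def
proof (rule span_minimal[OF _ subspace_span], rule subsetI)
  fix z assume "z \<in> {a * b |a b. a \<in> Hplus scale Hn \<and> b \<in> Hplus scale Hn}"
  then obtain a b where z: "z = a * b" and ab: "a \<in> Hplus scale Hn" "b \<in> Hplus scale Hn" by blast
  let ?NE = "prod_list ` {w\<in>lists alphabet. w \<noteq> []}"
  have "a \<in> span ?NE" "b \<in> span ?NE"
    using ab Hplus_subset_span_nonempty_words by blast+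
  then have "z \<in> span {x * y |x y. x \<in> ?NE \<and> y \<in> ?NE}"
    unfolding z by (rule mult_in_span_products)
  moreover have "{x * y |x y. x \<in> ?NE \<and> y \<in> ?NE} \<subseteq> prod_list ` {w\<in>lists alphabet. 2 \<le> length w}"
  proof (rule subsetI)
    fix p assume "p \<in> {x * y |x y. x \<in> ?NE \<and> y \<in> ?NE}"
    then obtain u v where uv: "u \<in> lists alphabet" "u \<noteq> []" "v \<in> lists alphabet" "v \<noteq> []"
      and "p = prod_list u * prod_list v" by blast
    then have p: "p = prod_list (u @ v)" by simp
    have "u @ v \<in> {w\<in>lists alphabet. 2 \<le> length w}"
      using uv by (cases u; cases v) auto
    then show "p \<in> prod_list ` {w\<in>lists alphabet. 2 \<le> length w}" using p by blast
  qed
  ultimately show "z \<in> span (prod_list ` {w\<in>lists alphabet. 2 \<le> length w})"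
    using span_mono by blast
qed

lemma prod_list_long_word_in_Hplus2:
  assumes w: "w \<in> lists alphabet" "2 \<le> length w"
  shows "prod_list w \<in> Hplus2 scale Hn"
proof -
  obtain a w' where aw: "w = a # w'" "w' \<noteq> []"
    using w(2) by (auto simp: Suc_le_length_iff numeral_2_eq_2)
  have wl: "a \<in> alphabet" "w' \<in> lists alphabet" using w(1) aw by auto
  have "a \<in> Hn (letter_deg a)" using letters_letter_deg[OF wl(1)] letters(3) by blast
  then have a: "a \<in> Hplus scale Hn"
    unfolding Hplus_def using letter_deg_pos[OF wl(1)] by (intro span_base) auto
  have "1 \<le> weight w'" using aw(2) length_le_weight[OF wl(2)] by (cases w') auto
  then have "prod_list w' \<in> Hplus scale Hn"
    unfolding Hplus_def using psi_weight[OF wl(2)] by (intro span_base) auto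
  then show ?thesis
    unfolding Hplus2_def using a aw(1) by (intro span_base) (auto intro!: exI)
qed

lemma dim_Hn_inter_Hplus2: "dim (Hn n \<inter> Hplus2 scale Hn) = card {w\<in>words n. 2 \<le> length w}"
proof -
  let ?Q = "{w\<in>words n. 2 \<le> length w}"
  have sub: "?Q \<subseteq> words n" by blast
  have "Hn n \<inter> Hplus2 scale Hn \<subseteq> span (prod_list ` ?Q)"
  proof
    fix x assume x: "x \<in> Hn n \<inter> Hplus2 scale Hn"
    then have "x \<in> span (prod_list ` {w \<in> {w\<in>lists alphabet. 2 \<le> length w}. weight w = n})"
      using Hplus2_subset_span_long_words by (intro in_span_words_of_weight) auto
    moreover have "{w \<in> {w\<in>lists alphabet. 2 \<le> length w}. weight w = n} = ?Q"
      unfolding words_def by auto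
    ultimately show "x \<in> span (prod_list ` ?Q)" by simp
  qed
  moreover have "prod_list ` ?Q \<subseteq> Hn n \<inter> Hplus2 scale Hn"
    using psi_words_subset_Hn prod_list_long_word_in_Hplus2 unfolding words_def by blast
  moreover have "independent (prod_list ` ?Q)"
    by (rule independent_mono[OF independent_psi_words image_mono[OF sub]])
  moreover have "card (prod_list ` ?Q) = card ?Q"
    by (rule card_image[OF inj_on_subset[OF inj_on_psi_words sub]])
  ultimately show ?thesis by (intro dim_unique)
qed

lemma indec_dim_eq_card_letters:
  assumes "1 \<le> n"
  shows "indec_dim scale Hn n = card (letters n)"
proof -
  let ?Q = "{w\<in>words n. 2 \<le> length w}" and ?L = "{w\<in>words n. length w = 1}"
  have "2 \<le> length w \<or> length w = 1" if "w \<in> words n" for w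
    using words_nonempty[OF assms that] by (cases w) (auto simp: Suc_le_eq)
  then have "words n = ?Q \<union> ?L" by auto
  then have "card (words n) = card (?Q \<union> ?L)" by (rule arg_cong)
  also have "\<dots> = card ?Q + card ?L" using finite_words[of n] by (intro card_Un_disjoint) auto
  finally have "card (words n) = card ?Q + card ?L" .
  then show ?thesis
    unfolding indec_dim_def dim_Hn_eq_card_words dim_Hn_inter_Hplus2 card_words_length_1 by simp
qed

end

locale cofree_graded_coalgebra = graded_word_basis scale Hn W \<phi>
  for scale :: "'k::field \<Rightarrow> 'h::ring_1 \<Rightarrow> 'h" and Hn and W and \<phi> +
  fixes \<Delta> :: "'h \<Rightarrow> ('h \<times> 'h) list" and \<epsilon> :: "'h \<Rightarrow> 'k"
  assumes coprod_add: "\<And>x y. teq scale (\<Delta> (x + y)) (\<Delta> x @ \<Delta> y)"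
    and coprod_scale: "\<And>c x. teq scale (\<Delta> (scale c x)) (map (\<lambda>(a, b). (scale c a, b)) (\<Delta> x))"
    and coprod_phi: "\<And>w. w \<in> lists W \<Longrightarrow>
      teq scale (\<Delta> (\<phi> w)) (map (\<lambda>i. (\<phi> (take i w), \<phi> (drop i w))) [0..<Suc (length w)])"
    and counit_phi: "\<And>w. w \<in> lists W \<Longrightarrow> \<epsilon> (\<phi> w) = (if w = [] then 1 else 0)"
    and lfun_counit: "lfun scale \<epsilon>" and counit_1: "\<epsilon> 1 = 1"
    and Hn_0: "Hn 0 = range (\<lambda>c. scale c 1)"
begin

lemma phi_Nil: "\<phi> [] = 1"
proof -
  have "\<phi> [] \<in> Hn 0" using psi_weight[of "[]"] by simp
  then obtain c where c: "\<phi> [] = scale c 1" using Hn_0 by auto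
  have "\<epsilon> (scale c 1) = c" using lfun_counit counit_1 by (simp add: lfun_def)
  then have "c = 1" using c counit_phi[of "[]"] by simp
  then show ?thesis using c by simp
qed

text \<open>The pairings with f \<otimes> g for linear functionals f, g separate H \<otimes> H (this is how teq
  is defined), so they give access to \<Delta> as a linear map.\<close>

definition pair_coprod :: "('h \<Rightarrow> 'k) \<Rightarrow> ('h \<Rightarrow> 'k) \<Rightarrow> 'h \<Rightarrow> 'k" where
  "pair_coprod f g x = tev f g (\<Delta> x)"

lemma pair_coprod_add:
  "lfun scale f \<Longrightarrow> lfun scale g \<Longrightarrow> pair_coprod f g (x + y) = pair_coprod f g x + pair_coprod f g y"
  using coprod_add[of x y] unfolding pair_coprod_def teq_def by (simp add: tev_append)

lemma pair_coprod_scale: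
  "lfun scale f \<Longrightarrow> lfun scale g \<Longrightarrow> pair_coprod f g (scale c x) = c * pair_coprod f g x"
  using coprod_scale[of c x] unfolding pair_coprod_def teq_def by (simp add: tev_scale_left)

lemma pair_coprod_sum:
  assumes "lfun scale f" "lfun scale g" "finite T"
  shows "pair_coprod f g (\<Sum>y\<in>T. scale (r y) y) = (\<Sum>y\<in>T. r y * pair_coprod f g y)"
  using assms(3)
proof (induction T)
  case empty
  show ?case using pair_coprod_scale[OF assms(1,2), of 0 0] by simp
next
  case (insert a T)
  then show ?case using pair_coprod_add[OF assms(1,2)] pair_coprod_scale[OF assms(1,2)] by simp
qed

lemma pair_coprod_phi:
  assumes "w \<in> lists W" "lfun scale f" "lfun scale g"
  shows "pair_coprod f g (\<phi> w) = (\<Sum>i<Suc (length w). f (\<phi> (take i w)) * g (\<phi> (drop i w)))"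
proof -
  have "pair_coprod f g (\<phi> w) = tev f g (map (\<lambda>i. (\<phi> (take i w), \<phi> (drop i w))) [0..<Suc (length w)])"
    using coprod_phi[OF assms(1)] assms(2,3) unfolding pair_coprod_def teq_def by blast
  also have "\<dots> = (\<Sum>i<Suc (length w). f (\<phi> (take i w)) * g (\<phi> (drop i w)))"
    by (simp add: tev_def o_def interv_sum_list_conv_sum_set_nat atLeast0LessThan)
  finally show ?thesis .
qed

lemma prim_iff_pair_coprod:
  "x \<in> prim scale \<Delta> \<longleftrightarrow>
     (\<forall>f g. lfun scale f \<longrightarrow> lfun scale g \<longrightarrow> pair_coprod f g x = f x * g 1 + f 1 * g x)"
  unfolding prim_def teq_def pair_coprod_def by (simp add: tev_def)

lemma phi_singleton_prim: "c \<in> W \<Longrightarrow> \<phi> [c] \<in> prim scale \<Delta>"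
  unfolding prim_iff_pair_coprod by (simp add: pair_coprod_phi phi_Nil)

lemma deconcatenation_dual:
  assumes u: "u \<in> lists (letters_upto n)" and v: "v \<in> lists (letters_upto n)"
  obtains f g where "lfun scale f"
    and "\<And>w. w \<in> lists (letters_upto n) \<Longrightarrow> f (\<phi> w) = (if w = u then 1 else 0)"
    and "lfun scale g"
    and "\<And>w. w \<in> lists (letters_upto n) \<Longrightarrow> g (\<phi> w) = (if w = v then 1 else 0)"
    and "\<And>w. w \<in> lists (letters_upto n) \<Longrightarrow> pair_coprod f g (\<phi> w) = (if w = u @ v then 1 else 0)"
proof -
  let ?B = "\<phi> ` lists (letters_upto n)"
  have indicator: "\<exists>f. lfun scale f \<and> (\<forall>w\<in>lists (letters_upto n). f (\<phi> w) = (if w = p then 1 else 0))"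
    if p: "p \<in> lists (letters_upto n)" for p
  proof -
    obtain f where f: "lfun scale f" "\<And>y. y \<in> ?B \<Longrightarrow> f y = (if y = \<phi> p then 1 else 0)"
      using lfun_indicator_exists[OF vector_space_axioms letters_upto(4)] by blast
    have "f (\<phi> w) = (if w = p then 1 else 0)" if "w \<in> lists (letters_upto n)" for w
      using f(2)[of "\<phi> w"] inj_onD[OF letters_upto(3), of w p] that p by auto
    then show ?thesis using f(1) by blast
  qed
  obtain f g where f: "lfun scale f" "\<forall>w\<in>lists (letters_upto n). f (\<phi> w) = (if w = u then 1 else 0)"
    and g: "lfun scale g" "\<forall>w\<in>lists (letters_upto n). g (\<phi> w) = (if w = v then 1 else 0)"
    using indicator[OF u] indicator[OF v] by blast
  have pc: "pair_coprod f g (\<phi> w) = (if w = u @ v then 1 else 0)" if w: "w \<in> lists (letters_upto n)" for w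
  proof -
    have wW: "w \<in> lists W" using w letters_upto(2) by blast
    have "take i w \<in> lists (letters_upto n)" "drop i w \<in> lists (letters_upto n)" for i
      using w by (auto dest: in_set_takeD in_set_dropD)
    then have "pair_coprod f g (\<phi> w) =
        (\<Sum>i<Suc (length w). (if take i w = u then 1 else 0) * (if drop i w = v then 1 else 0))"
      using f(2) g(2) by (simp add: pair_coprod_phi[OF wW f(1) g(1)])
    also have "\<dots> = (if w = u @ v then 1 else 0)" by (rule sum_take_drop_indicator)
    finally show ?thesis .
  qed
  show ?thesis using f(2) g(2) by (intro that[OF f(1) _ g(1) _ pc]) auto
qed

text \<open>Pairing a primitive x = \<Sum> r_w \<phi>(w) with the functional dual to the splitting u \<otimes> v
  of a word of length at least two extracts its coefficient on one side, and gives f x g 1 + f 1 g x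
  = 0 on the other, because neither u nor v is empty.\<close>

lemma prim_coeff_long_word_eq_0:
  assumes x: "x \<in> prim scale \<Delta>" "x = (\<Sum>y\<in>\<phi> ` words n. scale (r y) y)"
    and w0: "w0 \<in> words n" "2 \<le> length w0"
  shows "r (\<phi> w0) = 0"
proof -
  define u where "u = take 1 w0"
  define v where "v = drop 1 w0"
  have w0l: "w0 \<in> lists (letters_upto n)" using w0(1) words_subset_lists_letters_upto by blast
  have uv: "u \<in> lists (letters_upto n)" "v \<in> lists (letters_upto n)" "u \<noteq> []" "v \<noteq> []" "w0 = u @ v"
    using w0l w0(2) unfolding u_def v_def by (auto dest: in_set_takeD in_set_dropD)
  obtain f g where f: "lfun scale f" "\<And>w. w \<in> lists (letters_upto n) \<Longrightarrow> f (\<phi> w) = (if w = u then 1 else 0)"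
    and g: "lfun scale g" "\<And>w. w \<in> lists (letters_upto n) \<Longrightarrow> g (\<phi> w) = (if w = v then 1 else 0)"
    and fg: "\<And>w. w \<in> lists (letters_upto n) \<Longrightarrow> pair_coprod f g (\<phi> w) = (if w = u @ v then 1 else 0)"
    using deconcatenation_dual[OF uv(1,2)] by blast
  have "pair_coprod f g x = (\<Sum>y\<in>\<phi> ` words n. r y * pair_coprod f g y)"
    unfolding x(2) by (rule pair_coprod_sum[OF f(1) g(1)]) (simp add: finite_words)
  also have "\<dots> = (\<Sum>w\<in>words n. r (\<phi> w) * pair_coprod f g (\<phi> w))"
    by (simp add: sum.reindex[OF inj_on_psi_words])
  also have "\<dots> = (\<Sum>w\<in>words n. if w = w0 then r (\<phi> w0) else 0)"
    using words_subset_lists_letters_upto[of n] uv(5) by (intro sum.cong) (auto simp: fg subset_iff)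
  also have "\<dots> = r (\<phi> w0)" using w0(1) finite_words by simp
  finally have "pair_coprod f g x = r (\<phi> w0)" .
  moreover have "pair_coprod f g x = f x * g 1 + f 1 * g x"
    using x(1) f(1) g(1) prim_iff_pair_coprod by blast
  moreover have "f 1 = 0" "g 1 = 0"
    using f(2)[of "[]"] g(2)[of "[]"] uv(3,4) phi_Nil by auto
  ultimately show ?thesis by simp
qed

lemma prim_Hn_subset_span_letters:
  assumes "1 \<le> n"
  shows "prim scale \<Delta> \<inter> Hn n \<subseteq> span (\<phi> ` {w\<in>words n. length w = 1})"
proof
  fix x assume x: "x \<in> prim scale \<Delta> \<inter> Hn n"
  let ?P = "\<phi> ` words n"
  have "x \<in> span ?P" using Hn_subset_span_words x by blast
  then obtain r where xr: "x = (\<Sum>y\<in>?P. scale (r y) y)"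
    using span_finite[of ?P] finite_words by auto
  have "x = (\<Sum>y\<in>\<phi> ` {w\<in>words n. length w = 1}. scale (r y) y)"
    unfolding xr
  proof (rule sum.mono_neutral_right)
    show "\<forall>y\<in>?P - \<phi> ` {w\<in>words n. length w = 1}. scale (r y) y = 0"
    proof
      fix y assume "y \<in> ?P - \<phi> ` {w\<in>words n. length w = 1}"
      then obtain w where w: "w \<in> words n" "y = \<phi> w" "length w \<noteq> 1" by blast
      then have "2 \<le> length w" using words_nonempty[OF assms w(1)] by (cases w) (auto simp: Suc_le_eq)
      then show "scale (r y) y = 0" using prim_coeff_long_word_eq_0[OF _ xr w(1)] x w(2) by simp
    qed
  qed (auto simp: finite_words)
  also have "\<dots> \<in> span (\<phi> ` {w\<in>words n. length w = 1})"
    by (intro span_sum span_scale span_base)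
  finally show "x \<in> span (\<phi> ` {w\<in>words n. length w = 1})" .
qed

lemma dim_prim_Hn_eq_card_letters:
  assumes "1 \<le> n"
  shows "dim (prim scale \<Delta> \<inter> Hn n) = card (letters n)"
proof -
  let ?L = "{w\<in>words n. length w = 1}"
  have sub: "?L \<subseteq> words n" by blast
  have "\<phi> ` ?L \<subseteq> Hn n" using psi_words_subset_Hn[of n] by blast
  moreover have "\<phi> ` ?L \<subseteq> prim scale \<Delta>"
    unfolding words_length_1 using phi_singleton_prim letters(2)[of n] by auto
  ultimately have "\<phi> ` ?L \<subseteq> prim scale \<Delta> \<inter> Hn n" by blast
  moreover have "independent (\<phi> ` ?L)"
    by (rule independent_mono[OF independent_psi_words image_mono[OF sub]])
  moreover have "card (\<phi> ` ?L) = card (letters n)"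
    using card_image[OF inj_on_subset[OF inj_on_psi_words sub]] card_words_length_1 by simp
  ultimately show ?thesis by (intro dim_unique[OF _ prim_Hn_subset_span_letters[OF assms]])
qed

end

lemma graded_connected_hopfD:
  assumes "graded_connected_hopf scale Hn \<Delta> \<epsilon> S"
  shows "graded_vector_space scale Hn"
    and "\<And>c x y. scale c x * y = scale c (x * y)"
    and "\<And>c x y. x * scale c y = scale c (x * y)"
    and "\<And>x y i j. x \<in> Hn i \<Longrightarrow> y \<in> Hn j \<Longrightarrow> x * y \<in> Hn (i + j)"
    and "Hn 0 = range (\<lambda>c. scale c 1)"
    and "\<And>x y. teq scale (\<Delta> (x + y)) (\<Delta> x @ \<Delta> y)"
    and "\<And>c x. teq scale (\<Delta> (scale c x)) (map (\<lambda>(a, b). (scale c a, b)) (\<Delta> x))"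
    and "lfun scale \<epsilon>" and "\<epsilon> 1 = 1"
proof -
  note hopf = assms[unfolded graded_connected_hopf_def]
  show "graded_vector_space scale Hn"
    using hopf unfolding graded_vector_space_def graded_vector_space_axioms_def by simp
  show "scale c x * y = scale c (x * y)" "x * scale c y = scale c (x * y)" for c x y
    using hopf by metis+
qed (use assms in \<open>simp_all add: graded_connected_hopf_def\<close>)

lemma connected_dim_Hn_0:
  fixes scale :: "'k::field \<Rightarrow> 'h::ring_1 \<Rightarrow> 'h"
  assumes "vector_space scale" and "Hn 0 = range (\<lambda>c. scale c 1)"
  shows "vector_space.dim scale (Hn 0) = 1"
proof -
  interpret vector_space scale by fact
  have "Hn 0 = span {1}" using assms(2) by (simp add: span_singleton)
  then show ?thesis using dim_span_eq_card_independent[of "{1}"] by simp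
qed

lemma nonzero_scalar_words_not_basis:
  fixes scale :: "'k::field \<Rightarrow> 'h::ring_1 \<Rightarrow> 'h"
  assumes "vector_space scale" and scale_mult_left: "\<And>c x y. scale c x * y = scale c (x * y)"
    and "u = scale c 1" "u \<noteq> 0"
  shows "\<not> (inj_on prod_list (lists {u}) \<and> \<not> module.dependent scale (prod_list ` lists {u}))"
proof
  interpret vector_space scale by fact
  let ?P = "prod_list ` lists {u}"
  assume basis: "inj_on prod_list (lists {u}) \<and> independent ?P"
  have square: "prod_list [u, u] = scale c u" using assms(3) scale_mult_left by simp
  have P: "u \<in> ?P" "scale c u \<in> ?P"
    using image_eqI[of u prod_list "[u]"] image_eqI[of "scale c u" prod_list "[u, u]"] square by auto
  have "scale c u \<noteq> u"
    using basis square inj_onD[of prod_list "lists {u}" "[u, u]" "[u]"] by auto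
  then have "scale c u \<in> span (?P - {scale c u})" using P(1) by (intro span_scale span_base) auto
  then have "dependent ?P" unfolding dependent_def using P(2) by blast
  with basis show False by simp
qed

lemma free_hopf_free_graded_algebra:
  assumes hopf: "graded_connected_hopf scale Hn \<Delta> \<epsilon> S" and "free_hopf scale Hn"
  obtains V where "free_graded_algebra scale Hn V"
proof -
  interpret graded_vector_space scale Hn by (rule graded_connected_hopfD(1)[OF hopf])
  obtain V where V: "graded_subspace scale Hn V" "UNIV \<subseteq> span (prod_list ` lists V)"
    "\<And>B. finite B \<Longrightarrow> B \<subseteq> V \<Longrightarrow> independent B \<Longrightarrow>
       inj_on prod_list (lists B) \<and> independent (prod_list ` lists B)"
    using assms(2) unfolding free_hopf_def by blast
  have "V \<inter> Hn 0 \<subseteq> {0}"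
  proof
    fix u assume u: "u \<in> V \<inter> Hn 0"
    then obtain c where "u = scale c 1" using graded_connected_hopfD(5)[OF hopf] by auto
    then show "u \<in> {0}"
      using nonzero_scalar_words_not_basis[OF vector_space_axioms graded_connected_hopfD(2)[OF hopf]]
        V(3)[of "{u}"] u by fastforce
  qed
  moreover have "0 \<in> V \<inter> Hn 0"
    using V(1) subspace_0[OF subspace_Hn] unfolding graded_subspace_def by (simp add: subspace_0)
  ultimately have "V \<inter> Hn 0 = {0}" by blast
  moreover have "1 \<in> Hn 0" using graded_connected_hopfD(5)[OF hopf] by (metis rangeI scale_one)
  ultimately have "free_graded_algebra scale Hn V"
    using V graded_connected_hopfD[OF hopf]
      prod_list_graded[of Hn, OF _ graded_connected_hopfD(4)[OF hopf]]
    unfolding free_graded_algebra_def free_graded_algebra_axioms_def graded_word_basis_def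
      graded_word_basis_axioms_def graded_subspace_def
    by (auto simp: distrib_left distrib_right mult.assoc)
  then show ?thesis by (rule that)
qed

lemma cofree_hopf_cofree_graded_coalgebra:
  assumes hopf: "graded_connected_hopf scale Hn \<Delta> \<epsilon> S" and "cofree_hopf scale Hn \<Delta> \<epsilon>"
  obtains W \<phi> where "cofree_graded_coalgebra scale Hn W \<phi> \<Delta> \<epsilon>"
proof -
  interpret graded_vector_space scale Hn by (rule graded_connected_hopfD(1)[OF hopf])
  have "\<exists>W \<phi>. cofree_graded_coalgebra scale Hn W \<phi> \<Delta> \<epsilon>"
    using assms(2) unfolding cofree_hopf_def
    apply (elim exE conjE)
    subgoal premises W for W \<phi>
      using W(1) W(2-8)[rule_format] graded_vector_space_axioms graded_connected_hopfD(5-9)[OF hopf]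
      by (intro exI[of _ W] exI[of _ \<phi>], unfold_locales) (auto simp: graded_subspace_def)
    done
  then show ?thesis by (elim exE) (rule that)
qed

lemma free_hopf_indec_dim:
  assumes "graded_connected_hopf scale Hn \<Delta> \<epsilon> S" and "free_hopf scale Hn"
  obtains a where "\<And>m. 1 \<le> m \<Longrightarrow>
      vector_space.dim scale (Hn m) = (\<Sum>k\<in>{1..m}. a k * vector_space.dim scale (Hn (m - k)))"
    and "\<And>m. 1 \<le> m \<Longrightarrow> indec_dim scale Hn m = a m"
proof -
  obtain V where "free_graded_algebra scale Hn V" using free_hopf_free_graded_algebra[OF assms] .
  then interpret free_graded_algebra scale Hn V .
  show ?thesis
    by (rule that[of "\<lambda>k. card (letters k)"]) (use dim_Hn_recurrence indec_dim_eq_card_letters in auto)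
qed

lemma cofree_hopf_dim_prim:
  assumes "graded_connected_hopf scale Hn \<Delta> \<epsilon> S" and "cofree_hopf scale Hn \<Delta> \<epsilon>"
  obtains a where "\<And>m. 1 \<le> m \<Longrightarrow>
      vector_space.dim scale (Hn m) = (\<Sum>k\<in>{1..m}. a k * vector_space.dim scale (Hn (m - k)))"
    and "\<And>m. 1 \<le> m \<Longrightarrow> vector_space.dim scale (prim scale \<Delta> \<inter> Hn m) = a m"
proof -
  obtain W \<phi> where "cofree_graded_coalgebra scale Hn W \<phi> \<Delta> \<epsilon>"
    using cofree_hopf_cofree_graded_coalgebra[OF assms] .
  then interpret cofree_graded_coalgebra scale Hn W \<phi> \<Delta> \<epsilon> .
  show ?thesis
    by (rule that[of "\<lambda>k. card (letters k)"]) (use dim_Hn_recurrence dim_prim_Hn_eq_card_letters in auto)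
qed

theorem lemma4:
  fixes scale :: "'k::field \<Rightarrow> 'h::ring_1 \<Rightarrow> 'h"
    and Hn :: "nat \<Rightarrow> 'h set"
    and \<Delta> :: "'h \<Rightarrow> ('h \<times> 'h) list"
    and \<epsilon> :: "'h \<Rightarrow> 'k"
    and S :: "'h \<Rightarrow> 'h"
  assumes "CHAR('k) \<noteq> 2"
    and "graded_connected_hopf scale Hn \<Delta> \<epsilon> S"
    and "free_hopf scale Hn"
    and "cofree_hopf scale Hn \<Delta> \<epsilon>"
    and "n \<ge> 1"
  shows "vector_space.dim scale (prim scale \<Delta> \<inter> Hn n) = indec_dim scale Hn n"
proof -
  obtain a where rec_free: "\<And>m. 1 \<le> m \<Longrightarrow>
      vector_space.dim scale (Hn m) = (\<Sum>k\<in>{1..m}. a k * vector_space.dim scale (Hn (m - k)))"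
    and indec: "indec_dim scale Hn n = a n"
    using free_hopf_indec_dim[OF assms(2,3)] assms(5) by blast
  obtain b where rec_cofree: "\<And>m. 1 \<le> m \<Longrightarrow>
      vector_space.dim scale (Hn m) = (\<Sum>k\<in>{1..m}. b k * vector_space.dim scale (Hn (m - k)))"
    and prim: "vector_space.dim scale (prim scale \<Delta> \<inter> Hn n) = b n"
    using cofree_hopf_dim_prim[OF assms(2,4)] assms(5) by blast
  have "vector_space.dim scale (Hn 0) = 1"
    using graded_connected_hopfD(1,5)[OF assms(2)]
    by (intro connected_dim_Hn_0) (auto dest: graded_vector_space.axioms(1))
  then have "b n = a n"
    using convolution_recurrence_coeffs_eq[OF _ rec_cofree rec_free] assms(5) by blast
  then show ?thesis using indec prim by simp
qed

end
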